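(* Let $n\ge 3$ and $m\ge 1$. Then $$A(n,m)=\big(A(n-1,m-1)\cdot (R_n\setminus\{e\})\big)\ \cup\ A(n-1,m),$$ and this union is disjoint. Here $A(n-1,m-1)\cdot(R_n\setminus\{e\})=\{uw\mid u\in A(n-1,m-1),\ w\in R_n\setminus\{e\}\}$.
   Context: For $k\ge 2$, $A_k$ is the alternating group on $\{1,\dots,k\}$, regarded as the subgroup of $A_n$ fixing $k+1,\dots,n$ for $k\le n$; products are compositions of permutations, rightmost factor applied first. $T(A_k)=\{(1\,2)(i\,j)\mid 1\le i<j\le k\}$, and for $v\in A_k$, $\ell_{T(A_k)}(v)=\min\{r\ge 0\mid v=t_1\cdots t_r,\ t_i\in T(A_k)\}$. $A(k,m)=\{v\in A_k\mid \ell_{T(A_k)}(v)=m\}$ (length computed within $A_k$). $R_n=\{(1\,2)(i\,n)\mid 1\le i<n\}\cup\{e\}$, $e$ the identity. *)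

theory Defs
  imports "HOL-Combinatorics.Combinatorics"
begin

text \<open>Permutations are functions nat \<Rightarrow> nat; products are composition (rightmost first).\<close>

definition altgrp :: "nat \<Rightarrow> (nat \<Rightarrow> nat) set" where
  "altgrp k = {p. p permutes {1..k} \<and> evenperm p}"

definition Tgen :: "nat \<Rightarrow> (nat \<Rightarrow> nat) set" where
  "Tgen k = {transpose 1 2 \<circ> transpose i j | i j. 1 \<le> i \<and> i < j \<and> j \<le> k}"

definition lenT :: "nat \<Rightarrow> (nat \<Rightarrow> nat) \<Rightarrow> nat" where
  "lenT k v = (LEAST r. \<exists>ts. length ts = r \<and> set ts \<subseteq> Tgen k \<and> v = foldr (\<circ>) ts id)"

definition Acl :: "nat \<Rightarrow> nat \<Rightarrow> (nat \<Rightarrow> nat) set" where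
  "Acl k m = {v \<in> altgrp k. lenT k v = m}"

definition Rset :: "nat \<Rightarrow> (nat \<Rightarrow> nat) set" where
  "Rset n = {transpose 1 2 \<circ> transpose i n | i. 1 \<le> i \<and> i < n} \<union> {id}"

end

theory Submission
  imports Defs
begin

text \<open>
  Write T(A_k) = (1 2) T_k with T_k the transpositions of {1..k}. Pushing every factor (1 2) of a
  word of length r over T(A_k) to the right end conjugates the transpositions it passes, so v has
  such a word iff v (1 2)^r is a product of r transpositions. Deleting the point n from its cycle
  turns a product of r transpositions of {1..n} into a product of r transpositions of {1..n-1} if
  n is fixed, and of r - 1 of them otherwise. Hence u \<in> A_{n-1} has the same length in A_n as in
  A_{n-1}, while u (1 2)(j n) has length one more. An element of A_n lies in A_{n-1} if it fixes n
  and has the form u (1 2)(j n) otherwise, which splits A(n, m) according to whether n is fixed.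
\<close>

section \<open>Products of generators\<close>

definition products :: "('a \<Rightarrow> 'a) set \<Rightarrow> nat \<Rightarrow> ('a \<Rightarrow> 'a) set" where
  "products G r = {foldr (\<circ>) ts id | ts. length ts = r \<and> set ts \<subseteq> G}"

lemma lenT_eq_Least_products: "lenT k v = (LEAST r. v \<in> products (Tgen k) r)"
  unfolding lenT_def products_def by (rule arg_cong[where f = Least]) auto

lemma products_0 [simp]: "products G 0 = {id}"
  by (auto simp: products_def)

lemma products_Suc_left:
  "v \<in> products G (Suc r) \<longleftrightarrow> (\<exists>g\<in>G. \<exists>w\<in>products G r. v = g \<circ> w)"
proof
  assume "v \<in> products G (Suc r)"
  then obtain ts where ts: "length ts = Suc r" "set ts \<subseteq> G" "v = foldr (\<circ>) ts id"
    by (auto simp: products_def)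
  then obtain g ts' where "ts = g # ts'"
    by (cases ts) auto
  with ts show "\<exists>g\<in>G. \<exists>w\<in>products G r. v = g \<circ> w"
    by (auto simp: products_def)
next
  assume "\<exists>g\<in>G. \<exists>w\<in>products G r. v = g \<circ> w"
  then obtain g ts where "g \<in> G" "length ts = r" "set ts \<subseteq> G" "v = g \<circ> foldr (\<circ>) ts id"
    by (auto simp: products_def)
  then show "v \<in> products G (Suc r)"
    unfolding products_def by (intro CollectI exI[of _ "g # ts"]) simp
qed

lemma foldr_comp_snoc: "foldr (\<circ>) (ts @ [g]) id = foldr (\<circ>) ts id \<circ> g"
  by (induction ts) (simp_all add: comp_assoc)

lemma products_Suc_right:
  "v \<in> products G (Suc r) \<longleftrightarrow> (\<exists>g\<in>G. \<exists>w\<in>products G r. v = w \<circ> g)"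
proof
  assume "v \<in> products G (Suc r)"
  then obtain ts where ts: "length ts = Suc r" "set ts \<subseteq> G" "v = foldr (\<circ>) ts id"
    by (auto simp: products_def)
  then obtain ts' g where "ts = ts' @ [g]"
    by (cases ts rule: rev_cases) auto
  moreover from this ts have "foldr (\<circ>) ts' id \<in> products G r" "g \<in> G"
    by (auto simp: products_def)
  ultimately show "\<exists>g\<in>G. \<exists>w\<in>products G r. v = w \<circ> g"
    using ts(3) foldr_comp_snoc by blast
next
  assume "\<exists>g\<in>G. \<exists>w\<in>products G r. v = w \<circ> g"
  then obtain g ts where "g \<in> G" "length ts = r" "set ts \<subseteq> G" "v = foldr (\<circ>) ts id \<circ> g"
    by (auto simp: products_def)
  then show "v \<in> products G (Suc r)"
    unfolding products_def
    by (intro CollectI exI[of _ "ts @ [g]"]) (simp add: foldr_comp_snoc del: foldr_append)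
qed

lemma products_mono: "G \<subseteq> H \<Longrightarrow> products G r \<subseteq> products H r"
  by (auto simp: products_def)

lemma products_Suc_Suc_involution:
  assumes "g \<in> G" "g \<circ> g = id" "v \<in> products G r"
  shows "v \<in> products G (Suc (Suc r))"
proof -
  have "g \<circ> v \<in> products G (Suc r)"
    using assms(1,3) products_Suc_left by blast
  moreover have "v = g \<circ> (g \<circ> v)"
    using assms(2) by (simp flip: comp_assoc)
  ultimately show ?thesis
    using assms(1) products_Suc_left by metis
qed

lemma funpow_involution:
  assumes "s \<circ> s = id"
  shows "s ^^ k \<circ> s ^^ k = id"
proof -
  have "s ^^ k \<circ> s ^^ k = (s ^^ 2) ^^ k"
    by (metis funpow_add funpow_mult mult_2 mult.commute)
  then show ?thesis
    using assms by (simp add: numeral_2_eq_2 id_funpow)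
qed

lemma funpow_even_involution: "s \<circ> s = id \<Longrightarrow> even k \<Longrightarrow> s ^^ k = id"
  by (metis evenE funpow_add funpow_involution mult_2)

lemma funpow_conj_closed:
  assumes "\<forall>t\<in>G. s \<circ> t \<circ> s \<in> G" "t \<in> G"
  shows "s ^^ k \<circ> t \<circ> s ^^ k \<in> G"
proof (induction k)
  case (Suc k)
  then have "s \<circ> (s ^^ k \<circ> t \<circ> s ^^ k) \<circ> s \<in> G"
    using assms(1) by blast
  moreover have "s ^^ Suc k \<circ> t \<circ> s ^^ Suc k = s \<circ> (s ^^ k \<circ> t \<circ> s ^^ k) \<circ> s"
    by (metis comp_assoc funpow.simps(2) funpow_Suc_right)
  ultimately show ?case
    by metis
qed (use assms in simp)

text \<open>Moving the left factors s of \<open>(s t\<^sub>1) \<cdots> (s t\<^sub>r)\<close> to the right end conjugates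
  the \<open>t\<^sub>i\<close> they pass.\<close>

lemma products_twisted:
  assumes inv: "s \<circ> s = id" and conj: "\<forall>t\<in>G. s \<circ> t \<circ> s \<in> G"
  shows "v \<in> products ((\<circ>) s ` G) r \<longleftrightarrow> v \<circ> s ^^ r \<in> products G r"
proof (induction r arbitrary: v)
  case (Suc r)
  have inv_r: "s ^^ r \<circ> s ^^ r = id" and inv_Suc_r: "s ^^ Suc r \<circ> s ^^ Suc r = id"
    using funpow_involution[OF inv] by blast+
  have inv_r_apply: "(s ^^ r) ((s ^^ r) x) = x" for x
    using fun_cong[OF inv_r] by simp
  have Suc_r: "s ^^ Suc r = s ^^ r \<circ> s"
    by (rule funpow_Suc_right)
  have inv_Suc_r_apply: "(s ^^ r) (s ((s ^^ r) (s x))) = x" for x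
    using fun_cong[OF inv_Suc_r] by (simp add: Suc_r del: funpow.simps)
  show ?case
  proof
    assume "v \<in> products ((\<circ>) s ` G) (Suc r)"
    then obtain g w where g: "g \<in> G" and w: "w \<in> products ((\<circ>) s ` G) r" and v: "v = w \<circ> (s \<circ> g)"
      by (auto simp: products_Suc_right)
    have "v \<circ> s ^^ Suc r = (w \<circ> s ^^ r) \<circ> (s ^^ Suc r \<circ> g \<circ> s ^^ Suc r)"
      unfolding v by (simp add: fun_eq_iff Suc_r inv_r_apply del: funpow.simps)
    moreover have "w \<circ> s ^^ r \<in> products G r"
      using Suc.IH w by blast
    moreover have "s ^^ Suc r \<circ> g \<circ> s ^^ Suc r \<in> G"
      using funpow_conj_closed[OF conj g] by blast
    ultimately show "v \<circ> s ^^ Suc r \<in> products G (Suc r)"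
      by (auto simp: products_Suc_right)
  next
    assume "v \<circ> s ^^ Suc r \<in> products G (Suc r)"
    then obtain g W where g: "g \<in> G" and W: "W \<in> products G r" and v: "v \<circ> s ^^ Suc r = W \<circ> g"
      by (auto simp: products_Suc_right)
    have "v = W \<circ> g \<circ> s ^^ Suc r"
      by (metis v comp_assoc comp_id inv_Suc_r)
    then have "v = (W \<circ> s ^^ r) \<circ> (s \<circ> (s ^^ Suc r \<circ> g \<circ> s ^^ Suc r))"
      by (simp add: fun_eq_iff Suc_r inv_Suc_r_apply del: funpow.simps)
    moreover have "W \<circ> s ^^ r \<in> products ((\<circ>) s ` G) r"
      using Suc.IH[of "W \<circ> s ^^ r"] W by (metis comp_assoc comp_id inv_r)
    moreover have "s \<circ> (s ^^ Suc r \<circ> g \<circ> s ^^ Suc r) \<in> (\<circ>) s ` G"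
      using funpow_conj_closed[OF conj g] by blast
    ultimately show "v \<in> products ((\<circ>) s ` G) (Suc r)"
      unfolding products_Suc_right by blast
  qed
qed simp

section \<open>Products of transpositions\<close>

definition transpositions :: "'a set \<Rightarrow> ('a \<Rightarrow> 'a) set" where
  "transpositions S = {transpose i j | i j. i \<in> S \<and> j \<in> S \<and> i \<noteq> j}"

lemma transpose_in_transpositions: "i \<in> S \<Longrightarrow> j \<in> S \<Longrightarrow> i \<noteq> j \<Longrightarrow> transpose i j \<in> transpositions S"
  unfolding transpositions_def by blast

lemma transpose_conj:
  "transpose a b \<circ> transpose i j \<circ> transpose a b = transpose (transpose a b i) (transpose a b j)"
  by (rule ext) (simp add: transpose_def)

lemma transpositions_conj_closed:
  assumes "a \<in> S" "b \<in> S" "t \<in> transpositions S"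
  shows "transpose a b \<circ> t \<circ> transpose a b \<in> transpositions S"
proof -
  obtain i j where t: "t = transpose i j" "i \<in> S" "j \<in> S" "i \<noteq> j"
    using assms(3) by (auto simp: transpositions_def)
  have "transpose a b \<circ> t \<circ> transpose a b = transpose (transpose a b i) (transpose a b j)"
    unfolding t(1) by (rule transpose_conj)
  moreover have "transpose a b i \<noteq> transpose a b j"
    using t(4) by (metis transpose_eq_imp_eq)
  ultimately show ?thesis
    using assms(1,2) t(2,3) by (auto simp: transpose_def intro!: transpose_in_transpositions)
qed

lemma permutes_products_transpositions: "q \<in> products (transpositions S) r \<Longrightarrow> q permutes S"
proof (induction r arbitrary: q)
  case (Suc r)
  then show ?case
    by (auto simp: products_Suc_left transpositions_def intro: permutes_compose permutes_swap_id)
qed simp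

lemma permutation_products_transpositions: "q \<in> products (transpositions S) r \<Longrightarrow> permutation q"
proof (induction r arbitrary: q)
  case (Suc r)
  then show ?case
    by (auto simp: products_Suc_left transpositions_def
        intro: permutation_compose permutation_swap_id)
qed simp

lemma evenperm_products_transpositions:
  "q \<in> products (transpositions S) r \<Longrightarrow> evenperm q \<longleftrightarrow> even r"
proof (induction r arbitrary: q)
  case (Suc r)
  then obtain i j w where "i \<noteq> j" and w: "w \<in> products (transpositions S) r"
    and q: "q = transpose i j \<circ> w"
    by (auto simp: products_Suc_left transpositions_def)
  have "evenperm q \<longleftrightarrow> (evenperm (transpose i j) \<longleftrightarrow> evenperm w)"
    unfolding q
    by (rule evenperm_comp[OF permutation_swap_id permutation_products_transpositions[OF w]])
  with Suc.IH[OF w] \<open>i \<noteq> j\<close> show ?case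
    by (simp add: evenperm_swap)
qed simp

lemma permutes_in_products_transpositions:
  assumes "p permutes S" "finite S"
  shows "\<exists>r. p \<in> products (transpositions S) r"
  using assms
proof (induction p rule: permutes_induct)
  case id
  then show ?case
    by (metis products_0 singletonI)
next
  case (swap a b p)
  then show ?case
    using transpose_in_transpositions products_Suc_left by metis
qed

section \<open>Deleting a point from its cycle\<close>

text \<open>The cycle \<open>\<dots> \<mapsto> x \<mapsto> a \<mapsto> q a \<mapsto> \<dots>\<close> of q becomes \<open>\<dots> \<mapsto> x \<mapsto> q a \<mapsto> \<dots>\<close>, and a is fixed.\<close>

definition splice_out :: "'a \<Rightarrow> ('a \<Rightarrow> 'a) \<Rightarrow> 'a \<Rightarrow> 'a" where
  "splice_out a q x = (if x = a then a else if q x = a then q a else q x)"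

lemma splice_out_id [simp]: "splice_out a id = id"
  by (rule ext) (simp add: splice_out_def)

lemma splice_out_fixed: "inj q \<Longrightarrow> q a = a \<Longrightarrow> splice_out a q = q"
  by (rule ext) (auto simp: splice_out_def inj_eq)

lemma splice_out_transpose_comp_away:
  "b \<noteq> a \<Longrightarrow> c \<noteq> a \<Longrightarrow> inj w \<Longrightarrow>
    splice_out a (transpose b c \<circ> w) = transpose b c \<circ> splice_out a w"
  by (rule ext) (auto simp: splice_out_def transpose_def)

lemma splice_out_transpose_comp_through:
  "c \<noteq> a \<Longrightarrow> inj w \<Longrightarrow> splice_out a (transpose c a \<circ> w) =
    (if w a = a \<or> w a = c then splice_out a w else transpose c (w a) \<circ> splice_out a w)"
  by (rule ext) (auto simp: splice_out_def transpose_def inj_eq)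

lemma splice_out_comp_transpose_comp:
  "inj u \<Longrightarrow> inj \<sigma> \<Longrightarrow> u a = a \<Longrightarrow> \<sigma> a = a \<Longrightarrow> b \<noteq> a \<Longrightarrow>
    splice_out a (u \<circ> transpose b a \<circ> \<sigma>) = u \<circ> \<sigma>"
  by (rule ext) (auto simp: splice_out_def transpose_def inj_eq)

lemma products_moving_imp_pos: "q \<in> products G r \<Longrightarrow> q a \<noteq> a \<Longrightarrow> 0 < r"
  by (cases r) auto

lemma splice_out_step_away:
  assumes bc: "b \<in> S - {a}" "c \<in> S - {a}" "b \<noteq> c" and inj_w: "inj w"
    and IH: "splice_out a w \<in> products (transpositions (S - {a})) (if w a = a then r else r - 1)"
    and r_pos: "w a \<noteq> a \<Longrightarrow> 0 < r"
  shows "splice_out a (transpose b c \<circ> w)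
    \<in> products (transpositions (S - {a})) (if (transpose b c \<circ> w) a = a then Suc r else r)"
proof -
  have "transpose b c \<in> transpositions (S - {a})"
    using bc by (rule transpose_in_transpositions)
  moreover have "splice_out a (transpose b c \<circ> w) = transpose b c \<circ> splice_out a w"
    using bc inj_w by (intro splice_out_transpose_comp_away) auto
  ultimately have "splice_out a (transpose b c \<circ> w)
      \<in> products (transpositions (S - {a})) (Suc (if w a = a then r else r - 1))"
    using IH unfolding products_Suc_left by blast
  moreover have "(transpose b c \<circ> w) a = a \<longleftrightarrow> w a = a"
    using bc by (auto simp: transpose_def)
  ultimately show ?thesis
    using r_pos by (cases "w a = a") auto
qed

text \<open>A factor (d a) either opens the cycle of a, closes it, or merges a second cycle into it;
  in the middle case the length drops by two and is restored by a redundant factor g g = id.\<close>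

lemma splice_out_step_through:
  assumes d: "d \<in> S - {a}" and w: "w permutes S" and nonempty: "transpositions (S - {a}) \<noteq> {}"
    and IH: "splice_out a w \<in> products (transpositions (S - {a})) (if w a = a then r else r - 1)"
    and r_pos: "w a \<noteq> a \<Longrightarrow> 0 < r"
  shows "splice_out a (transpose d a \<circ> w)
    \<in> products (transpositions (S - {a})) (if (transpose d a \<circ> w) a = a then Suc r else r)"
proof -
  let ?T = "transpositions (S - {a})"
  have splice: "splice_out a (transpose d a \<circ> w) =
      (if w a = a \<or> w a = d then splice_out a w else transpose d (w a) \<circ> splice_out a w)"
    using d permutes_inj[OF w] by (intro splice_out_transpose_comp_through) auto
  consider "w a = a" | "w a = d" | "w a \<noteq> a" "w a \<noteq> d"
    by blast
  then show ?thesis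
  proof cases
    case 1
    then show ?thesis
      using IH splice d by simp
  next
    case 2
    obtain g where g: "g \<in> ?T"
      using nonempty by blast
    then have "g \<circ> g = id"
      by (auto simp: transpositions_def)
    moreover have "splice_out a w \<in> products ?T (r - 1)"
      using IH 2 d by simp
    ultimately have "splice_out a w \<in> products ?T (Suc (Suc (r - 1)))"
      using g by (intro products_Suc_Suc_involution)
    then show ?thesis
      using 2 d r_pos splice by simp
  next
    case 3
    then have "w a \<in> S - {a}"
      using w by (auto simp: permutes_in_image dest: permutes_not_in)
    with 3 d have "transpose d (w a) \<in> ?T"
      by (auto intro: transpose_in_transpositions)
    then have "splice_out a (transpose d a \<circ> w) \<in> products ?T (Suc (r - 1))"
      using IH 3 splice unfolding products_Suc_left by auto
    then show ?thesis
      using 3 r_pos by (simp add: transpose_def)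
  qed
qed

lemma splice_out_products_transpositions:
  assumes "q \<in> products (transpositions S) r" and nonempty: "transpositions (S - {a}) \<noteq> {}"
  shows "splice_out a q \<in> products (transpositions (S - {a})) (if q a = a then r else r - 1)"
  using assms(1)
proof (induction r arbitrary: q)
  case (Suc r)
  obtain b c w where bc: "b \<in> S" "c \<in> S" "b \<noteq> c" and w: "w \<in> products (transpositions S) r"
    and q: "q = transpose b c \<circ> w"
    using Suc.prems by (auto simp: products_Suc_left transpositions_def)
  note step_hyps = Suc.IH[OF w] products_moving_imp_pos[OF w, of a]
  have w_perm: "w permutes S"
    using w by (rule permutes_products_transpositions)
  consider "b \<noteq> a" "c \<noteq> a" | "b = a" | "c = a"
    by blast
  then show ?case
  proof cases
    case 1
    then show ?thesis
      unfolding q diff_Suc_1 using bc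
      by (intro splice_out_step_away[OF _ _ bc(3) permutes_inj[OF w_perm] step_hyps]) auto
  next
    case 2
    then show ?thesis
      unfolding q diff_Suc_1 2 transpose_commute[of a c]
      using bc 2 by (intro splice_out_step_through[OF _ w_perm nonempty step_hyps]) auto
  next
    case 3
    then show ?thesis
      unfolding q diff_Suc_1 3
      using bc 3 by (intro splice_out_step_through[OF _ w_perm nonempty step_hyps]) auto
  qed
qed simp

section \<open>The generating set T(A_k)\<close>

abbreviation s12 :: "nat \<Rightarrow> nat" where
  "s12 \<equiv> transpose 1 2"

lemma Icc_minus_last: "{1..n} - {n} = {1..n - 1 :: nat}"
  by auto

lemma transpose_12_in_transpositions: "2 \<le> k \<Longrightarrow> s12 \<in> transpositions {1..k}"
  by (simp add: transpose_in_transpositions)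

lemma transpositions_Icc_minus_last_nonempty: "3 \<le> (n::nat) \<Longrightarrow> transpositions ({1..n} - {n}) \<noteq> {}"
  unfolding Icc_minus_last using transpose_12_in_transpositions[of "n - 1"] by fastforce

lemma funpow_transpose_apply_other: "x \<noteq> a \<Longrightarrow> x \<noteq> b \<Longrightarrow> (transpose a b ^^ r) x = x"
  by (induction r) auto

lemma transpositions_Icc_ordered:
  "transpositions {1..k} = {transpose i j | i j. 1 \<le> i \<and> i < j \<and> j \<le> (k::nat)}"
proof -
  have "\<exists>i' j'. transpose i j = transpose i' j' \<and> 1 \<le> i' \<and> i' < j' \<and> j' \<le> k"
    if "i \<in> {1..k}" "j \<in> {1..k}" "i \<noteq> j" for i j
    using that by (metis atLeastAtMost_iff linorder_neqE_nat transpose_commute)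
  then show ?thesis
    unfolding transpositions_def by fastforce
qed

lemma Tgen_eq_image: "Tgen k = (\<circ>) s12 ` transpositions {1..k}"
  unfolding Tgen_def transpositions_Icc_ordered by blast

lemma Tgen_mono: "k \<le> l \<Longrightarrow> Tgen k \<subseteq> Tgen l"
  unfolding Tgen_def by fastforce

lemma products_Tgen_iff:
  "2 \<le> k \<Longrightarrow> v \<in> products (Tgen k) r \<longleftrightarrow> v \<circ> s12 ^^ r \<in> products (transpositions {1..k}) r"
  unfolding Tgen_eq_image by (rule products_twisted) (auto intro: transpositions_conj_closed)

lemma altgrp_in_products_Tgen:
  assumes "2 \<le> k" "u \<in> altgrp k"
  shows "\<exists>r. u \<in> products (Tgen k) r"
proof -
  obtain r where r: "u \<in> products (transpositions {1..k}) r"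
    using assms(2) permutes_in_products_transpositions by (auto simp: altgrp_def)
  then have "even r"
    using assms(2) evenperm_products_transpositions by (auto simp: altgrp_def)
  then have "s12 ^^ r = id"
    by (simp add: funpow_even_involution)
  with r show ?thesis
    using products_Tgen_iff[OF assms(1)] by (metis comp_id)
qed

lemma products_Tgen_restrict:
  assumes n: "3 \<le> n" and u: "u permutes {1..n - 1}"
  shows "u \<in> products (Tgen n) r \<longleftrightarrow> u \<in> products (Tgen (n - 1)) r"
proof
  assume "u \<in> products (Tgen (n - 1)) r"
  then show "u \<in> products (Tgen n) r"
    using products_mono[OF Tgen_mono[of "n - 1" n]] by auto
next
  assume "u \<in> products (Tgen n) r"
  then have q: "u \<circ> s12 ^^ r \<in> products (transpositions {1..n}) r"
    using products_Tgen_iff n by simp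
  have q_fixed: "(u \<circ> s12 ^^ r) n = n"
    using n u by (simp add: funpow_transpose_apply_other permutes_not_in)
  then have "splice_out n (u \<circ> s12 ^^ r) = u \<circ> s12 ^^ r"
    using permutes_inj[OF permutes_products_transpositions[OF q]]
    by (rule splice_out_fixed[rotated])
  then have "u \<circ> s12 ^^ r \<in> products (transpositions ({1..n} - {n})) r"
    using splice_out_products_transpositions[OF q transpositions_Icc_minus_last_nonempty[OF n]]
      q_fixed
    by simp
  then have "u \<circ> s12 ^^ r \<in> products (transpositions {1..n - 1}) r"
    unfolding Icc_minus_last .
  then show "u \<in> products (Tgen (n - 1)) r"
    using products_Tgen_iff[of "n - 1"] n by simp
qed

lemma comp_R_moves_last:
  assumes "3 \<le> n" "u permutes {1..n - 1}" "1 \<le> j" "j < n"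
  shows "(u \<circ> (s12 \<circ> transpose j n)) n \<noteq> n"
proof -
  have "s12 j \<in> {1..n - 1}"
    using assms by (auto simp: transpose_def)
  then have "u (s12 j) \<in> {1..n - 1}"
    using permutes_in_image[OF assms(2)] by blast
  then show ?thesis
    by auto
qed

lemma products_Tgen_comp_R:
  assumes n: "3 \<le> n" and u: "u permutes {1..n - 1}" and j: "1 \<le> j" "j < n"
  shows "u \<circ> (s12 \<circ> transpose j n) \<in> products (Tgen n) (Suc r) \<longleftrightarrow>
    u \<in> products (Tgen (n - 1)) r"
proof
  assume "u \<in> products (Tgen (n - 1)) r"
  moreover have "s12 \<circ> transpose j n \<in> Tgen n"
    using j unfolding Tgen_def by blast
  ultimately show "u \<circ> (s12 \<circ> transpose j n) \<in> products (Tgen n) (Suc r)"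
    using products_Tgen_restrict[OF n u] products_Suc_right by blast
next
  let ?q = "u \<circ> (s12 \<circ> transpose j n) \<circ> s12 ^^ Suc r"
  assume "u \<circ> (s12 \<circ> transpose j n) \<in> products (Tgen n) (Suc r)"
  then have q: "?q \<in> products (transpositions {1..n}) (Suc r)"
    using products_Tgen_iff n by simp
  have "?q = u \<circ> (s12 \<circ> transpose j n \<circ> s12) \<circ> s12 ^^ r"
    by (simp add: comp_assoc)
  also have "\<dots> = u \<circ> transpose (s12 j) n \<circ> s12 ^^ r"
    using n by (simp add: transpose_conj)
  finally have "splice_out n ?q = u \<circ> s12 ^^ r"
    using n j u by (simp add: splice_out_comp_transpose_comp permutes_inj permutes_not_in
        funpow_transpose_apply_other transpose_def)
  moreover have "?q n \<noteq> n"
    using comp_R_moves_last[OF n u j] n by (simp add: funpow_transpose_apply_other)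
  ultimately have "u \<circ> s12 ^^ r \<in> products (transpositions ({1..n} - {n})) r"
    using splice_out_products_transpositions[OF q transpositions_Icc_minus_last_nonempty[OF n]]
    by simp
  then have "u \<circ> s12 ^^ r \<in> products (transpositions {1..n - 1}) r"
    unfolding Icc_minus_last .
  then show "u \<in> products (Tgen (n - 1)) r"
    using products_Tgen_iff[of "n - 1"] n by simp
qed

section \<open>The decomposition of A(n, m)\<close>

lemma lenT_restrict: "3 \<le> n \<Longrightarrow> u permutes {1..n - 1} \<Longrightarrow> lenT n u = lenT (n - 1) u"
  by (simp add: lenT_eq_Least_products products_Tgen_restrict)

lemma lenT_comp_R:
  assumes n: "3 \<le> n" and u: "u \<in> altgrp (n - 1)" and j: "1 \<le> j" "j < n"
  shows "lenT n (u \<circ> (s12 \<circ> transpose j n)) = Suc (lenT (n - 1) u)"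
proof -
  let ?v = "u \<circ> (s12 \<circ> transpose j n)"
  have u_perm: "u permutes {1..n - 1}"
    using u by (simp add: altgrp_def)
  have "2 \<le> n - 1"
    using n by simp
  then obtain r where "u \<in> products (Tgen (n - 1)) r"
    using altgrp_in_products_Tgen[OF _ u] by blast
  then have "?v \<in> products (Tgen n) (Suc r)"
    using products_Tgen_comp_R[OF n u_perm j] by simp
  moreover have "?v \<notin> products (Tgen n) 0"
    using comp_R_moves_last[OF n u_perm j] by (metis id_apply products_0 singletonD)
  ultimately have "lenT n ?v = Suc (LEAST r. ?v \<in> products (Tgen n) (Suc r))"
    unfolding lenT_eq_Least_products by (rule Least_Suc)
  also have "\<dots> = Suc (lenT (n - 1) u)"
    unfolding lenT_eq_Least_products products_Tgen_comp_R[OF n u_perm j] ..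
  finally show ?thesis .
qed

lemma altgrp_comp: "p \<in> altgrp k \<Longrightarrow> q \<in> altgrp k \<Longrightarrow> p \<circ> q \<in> altgrp k"
  unfolding altgrp_def
  by (auto intro: permutes_compose
      simp: evenperm_comp permutes_imp_permutation[OF finite_atLeastAtMost])

lemma transpose_comp_transpose_in_altgrp:
  assumes "a \<in> {1..k}" "b \<in> {1..k}" "c \<in> {1..k}" "d \<in> {1..k}" "a \<noteq> b" "c \<noteq> d"
  shows "transpose a b \<circ> transpose c d \<in> altgrp k"
proof -
  have "transpose a b permutes {1..k}" "transpose c d permutes {1..k}"
    using assms(1-4) by (simp_all only: permutes_swap_id)
  then show ?thesis
    using assms(5,6) unfolding altgrp_def
    by (simp add: permutes_compose evenperm_comp permutation_swap_id evenperm_swap)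
qed

lemma altgrp_pred_iff: "v \<in> altgrp (n - 1) \<longleftrightarrow> v \<in> altgrp n \<and> v n = n"
proof
  assume v: "v \<in> altgrp (n - 1)"
  then have v_perm: "v permutes {1..n - 1}"
    by (simp add: altgrp_def)
  then have "v permutes {1..n}"
    by (rule permutes_subset) auto
  moreover have "v n = n"
    using v_perm by (rule permutes_not_in) auto
  ultimately show "v \<in> altgrp n \<and> v n = n"
    using v by (simp add: altgrp_def)
next
  assume v: "v \<in> altgrp n \<and> v n = n"
  then have "v permutes {1..n}"
    by (simp add: altgrp_def)
  then have "v permutes {1..n - 1}"
  proof (rule permutes_superset)
    fix x
    assume "x \<in> {1..n} - {1..n - 1}"
    then have "x = n"
      by auto
    then show "v x = x"
      using v by simp
  qed
  then show "v \<in> altgrp (n - 1)"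
    using v by (simp add: altgrp_def)
qed

lemma altgrp_moving_last:
  assumes n: "3 \<le> n" and v: "v \<in> altgrp n" and moves: "v n \<noteq> n"
  shows "\<exists>u j. u \<in> altgrp (n - 1) \<and> 1 \<le> j \<and> j < n \<and> v = u \<circ> (s12 \<circ> transpose j n)"
proof -
  have v_perm: "v permutes {1..n}"
    using v by (simp add: altgrp_def)
  obtain j where vj: "v j = n"
    by (metis permutes_surj[OF v_perm] surjD)
  moreover have "j \<in> {1..n}"
    using vj permutes_not_in[OF v_perm] n by (cases "j \<in> {1..n}") auto
  moreover have "j \<noteq> n"
    using vj moves by auto
  ultimately have j: "1 \<le> j" "j < n"
    by auto
  define u where "u = v \<circ> (transpose j n \<circ> s12)"
  have "u \<in> altgrp n"
    unfolding u_def using v j n by (intro altgrp_comp transpose_comp_transpose_in_altgrp) auto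
  moreover have "u n = n"
    using vj n by (simp add: u_def)
  moreover have "v = u \<circ> (s12 \<circ> transpose j n)"
    by (simp add: u_def fun_eq_iff)
  ultimately show ?thesis
    using j altgrp_pred_iff by blast
qed

lemma Rset_minus_id: "3 \<le> n \<Longrightarrow> Rset n - {id} = {s12 \<circ> transpose j n | j. 1 \<le> j \<and> j < n}"
proof -
  assume n: "3 \<le> n"
  have "s12 \<circ> transpose j n \<noteq> id" if "j < n" for j
  proof
    assume "s12 \<circ> transpose j n = id"
    then have "s12 j = n"
      by (metis comp_apply id_apply transpose_apply_second)
    then show False
      using n that by (auto simp: transpose_def split: if_splits)
  qed
  then show ?thesis
    unfolding Rset_def by auto
qed

lemma Acl_fixing_last:
  assumes n: "3 \<le> n"
  shows "{v \<in> Acl n m. v n = n} = Acl (n - 1) m"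
proof (rule set_eqI)
  fix v
  show "v \<in> {v \<in> Acl n m. v n = n} \<longleftrightarrow> v \<in> Acl (n - 1) m"
  proof (cases "v \<in> altgrp (n - 1)")
    case True
    then have "lenT n v = lenT (n - 1) v"
      using lenT_restrict[OF n] by (simp add: altgrp_def)
    with True show ?thesis
      using altgrp_pred_iff by (auto simp: Acl_def)
  next
    case False
    then show ?thesis
      using altgrp_pred_iff by (auto simp: Acl_def)
  qed
qed

lemma Acl_moving_last:
  assumes n: "3 \<le> n"
  shows "{v \<in> Acl n (Suc m). v n \<noteq> n} = (\<lambda>(u, w). u \<circ> w) ` (Acl (n - 1) m \<times> (Rset n - {id}))"
    (is "?A = ?B")
proof
  show "?A \<subseteq> ?B"
  proof
    fix v
    assume "v \<in> ?A"
    then have "v \<in> altgrp n" "v n \<noteq> n" and len: "lenT n v = Suc m"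
      by (auto simp: Acl_def)
    then obtain u j where u: "u \<in> altgrp (n - 1)" and j: "1 \<le> j" "j < n"
      and v: "v = u \<circ> (s12 \<circ> transpose j n)"
      using altgrp_moving_last[OF n] by blast
    then have "u \<in> Acl (n - 1) m"
      using len
      using lenT_comp_R[OF n u j] by (simp add: Acl_def)
    moreover have "s12 \<circ> transpose j n \<in> Rset n - {id}"
      using Rset_minus_id[OF n] j by blast
    ultimately show "v \<in> ?B"
      unfolding v by force
  qed
next
  show "?B \<subseteq> ?A"
  proof
    fix v
    assume "v \<in> ?B"
    then obtain u j where u: "u \<in> Acl (n - 1) m" and j: "1 \<le> j" "j < n"
      and v: "v = u \<circ> (s12 \<circ> transpose j n)"
      using Rset_minus_id[OF n] by auto
    then have u_alt: "u \<in> altgrp (n - 1)"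
      by (simp add: Acl_def)
    moreover have "s12 \<circ> transpose j n \<in> altgrp n"
      using j n by (intro transpose_comp_transpose_in_altgrp) auto
    ultimately have "v \<in> altgrp n"
      unfolding v using altgrp_pred_iff altgrp_comp by blast
    moreover have "lenT n v = Suc m"
      using lenT_comp_R[OF n u_alt j] u v by (simp add: Acl_def)
    moreover have "v n \<noteq> n"
      unfolding v using comp_R_moves_last[OF n _ j] u_alt by (simp add: altgrp_def)
    ultimately show "v \<in> ?A"
      by (simp add: Acl_def)
  qed
qed

theorem theorem5p3:
  fixes n m :: nat
  assumes "n \<ge> 3" and "m \<ge> 1"
  shows "Acl n m = ((\<lambda>(u, w). u \<circ> w) ` (Acl (n - 1) (m - 1) \<times> (Rset n - {id}))) \<union> Acl (n - 1) m
    \<and> ((\<lambda>(u, w). u \<circ> w) ` (Acl (n - 1) (m - 1) \<times> (Rset n - {id}))) \<inter> Acl (n - 1) m = {}"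
proof -
  obtain k where m: "m = Suc k"
    using assms(2) by (cases m) auto
  have "Acl n m = {v \<in> Acl n m. v n \<noteq> n} \<union> {v \<in> Acl n m. v n = n}"
    by blast
  moreover have "{v \<in> Acl n m. v n \<noteq> n} \<inter> {v \<in> Acl n m. v n = n} = {}"
    by blast
  ultimately show ?thesis
    using Acl_moving_last[OF assms(1), of k] Acl_fixing_last[OF assms(1), of m] m by simp
qed

end
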